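(* Let $s\ge 3$ and $n\ge 1$ be integers and let $\{M_1,\dots,M_{s-2}\}$ be a collection of mutually orthogonal sudoku solutions of order $n^2$ with symbols $\{0,1,\dots,n^2-1\}$. The collection is strongly orthogonal if and only if all of the following hold: (i) for every $i\in\{1,\dots,s-2\}$, every canonical $n\times n$ subsquare of $R(M_i)$ is a Latin square (on the symbols $\{0,\dots,n-1\}$); (ii) for every ordered pair of distinct $i,j\in\{1,\dots,s-2\}$ (relevant only when $s\ge 4$): (a) the composite solution $N_{ij}$ is a sudoku solution; (b) each large row of $R(M_i)$ is orthogonal to the corresponding large row of $M_j$; (c) each large column of $R(M_i)$ is orthogonal to the corresponding large column of $M_j$; (iii) for all pairwise distinct $i,j,k\in\{1,\dots,s-2\}$ (relevant only when $s\ge 5$): (a) each large row of $N_{ij}$ is orthogonal to the corresponding large row of $R(M_k)$; (b) each large column of $N_{ij}$ is orthogonal to the corresponding large column of $R(M_k)$; (c) $N_{ij}$ and $M_k$ are orthogonal; (iv) for all pairwise distinct $i,j,k,l\in\{1,\dots,s-2\}$ (relevant only when $s\ge 6$): $N_{ij}$ and $N_{kl}$ are orthogonal.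
   Context: A sudoku solution of order $n^2$ is an $n^2\times n^2$ array with entries in $\{0,1,\dots,n^2-1\}$ in which every symbol appears exactly once in each row, each column, and each of the $n^2$ canonical $n\times n$ subsquares (rows $an,\dots,an+n-1$, columns $bn,\dots,bn+n-1$). Rows and columns are numbered from $0$ (top, left). A location is identified with $(x_1,x_2,x_3,x_4)\in\mathbb{Z}_n^4$, meaning row $x_1n+x_2$ and column $x_3n+x_4$. The large row $x_1$ is the $n\times n^2$ subarray of rows $x_1n,\dots,x_1n+n-1$; the large column $x_3$ is the $n^2\times n$ subarray of columns $x_3n,\dots,x_3n+n-1$. Two arrays of the same shape with symbol sets $A$, $B$ with $|A||B|$ equal to the number of cells are orthogonal if upon superimposition every ordered pair in $A\times B$ appears exactly once. Every $x\in\{0,\dots,n^2-1\}$ is written $x=b_n\cdot n+b_1$ with $b_n,b_1\in\{0,\dots,n-1\}$; $b_n$ is the radix digit and $b_1$ the units digit. For a sudoku solution $M$, the radix solution $R(M)$ is the $n^2\times n^2$ array whose entry at each location is the radix digit of the entry of $M$ there. For sudoku solutions $M_i,M_j$, the composite solution $N_{ij}$ is the $n^2\times n^2$ array whose entry at each location is $n\cdot r_i+r_j$, where $r_i,r_j$ are the entries of $R(M_i),R(M_j)$ at that location. An ordered orthogonal array of type $\mathrm{OOA}(4,s,2,v)$ is a $2s\times v^4$ array over an alphabet of size $v$, whose rows are labeled $(i,j)$, $1\le i\le s$, $j\in\{1,2\}$, such that for every top-justified set $T$ of $4$ rows (i.e. $(i,2)\in T$ implies $(i,1)\in T$) the subarray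 formed by the rows of $T$ contains each $4$-tuple over the alphabet exactly once as a column. Given sudoku solutions $M_1,\dots,M_{s-2}$ of order $n^2$, the associated array is the $2s\times n^4$ array over $\{0,\dots,n-1\}$ having one column for each location $(x_1,x_2,x_3,x_4)\in\mathbb{Z}_n^4$, whose entries in rows $(1,1),(1,2),(2,1),(2,2)$ are $x_1,x_2,x_3,x_4$, and whose entries in rows $(i+2,1)$ and $(i+2,2)$ are the radix digit and units digit, respectively, of the symbol of $M_i$ at that location ($1\le i\le s-2$). A collection $\{M_1,\dots,M_{s-2}\}$ of mutually orthogonal sudoku solutions of order $n^2$ is strongly orthogonal if its associated array is an $\mathrm{OOA}(4,s,2,n)$. *)

theory Defs
  imports "HOL-Library.FuncSet"
begin

text \<open>Arrays of order n^2 are functions row -> column -> symbol (nat => nat => nat),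
  rows and columns numbered from 0.\<close>

definition orth_on :: "'c set \<Rightarrow> nat set \<Rightarrow> nat set \<Rightarrow> ('c \<Rightarrow> nat) \<Rightarrow> ('c \<Rightarrow> nat) \<Rightarrow> bool" where
  "orth_on C A B f g \<longleftrightarrow> bij_betw (\<lambda>x. (f x, g x)) C (A \<times> B)"

definition grid :: "nat \<Rightarrow> (nat \<times> nat) set" where
  "grid n = {0..<n^2} \<times> {0..<n^2}"

definition large_row :: "nat \<Rightarrow> nat \<Rightarrow> (nat \<times> nat) set" where
  "large_row n a = {a*n..<a*n+n} \<times> {0..<n^2}"

definition large_col :: "nat \<Rightarrow> nat \<Rightarrow> (nat \<times> nat) set" where
  "large_col n b = {0..<n^2} \<times> {b*n..<b*n+n}"

definition sudoku :: "nat \<Rightarrow> (nat \<Rightarrow> nat \<Rightarrow> nat) \<Rightarrow> bool" where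
  "sudoku n M \<longleftrightarrow>
     (\<forall>r<n^2. bij_betw (\<lambda>c. M r c) {0..<n^2} {0..<n^2}) \<and>
     (\<forall>c<n^2. bij_betw (\<lambda>r. M r c) {0..<n^2} {0..<n^2}) \<and>
     (\<forall>a<n. \<forall>b<n. bij_betw (\<lambda>(u,v). M (a*n+u) (b*n+v)) ({0..<n} \<times> {0..<n}) {0..<n^2})"

definition radix :: "nat \<Rightarrow> (nat \<Rightarrow> nat \<Rightarrow> nat) \<Rightarrow> nat \<Rightarrow> nat \<Rightarrow> nat" where
  "radix n M r c = M r c div n"

definition composite :: "nat \<Rightarrow> (nat \<Rightarrow> nat \<Rightarrow> nat) \<Rightarrow> (nat \<Rightarrow> nat \<Rightarrow> nat) \<Rightarrow> nat \<Rightarrow> nat \<Rightarrow> nat" where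
  "composite n Mi Mj r c = n * radix n Mi r c + radix n Mj r c"

definition subsquares_latin :: "nat \<Rightarrow> (nat \<Rightarrow> nat \<Rightarrow> nat) \<Rightarrow> bool" where
  "subsquares_latin n L \<longleftrightarrow>
     (\<forall>a<n. \<forall>b<n.
        (\<forall>u<n. bij_betw (\<lambda>v. L (a*n+u) (b*n+v)) {0..<n} {0..<n}) \<and>
        (\<forall>v<n. bij_betw (\<lambda>u. L (a*n+u) (b*n+v)) {0..<n} {0..<n}))"

definition locations :: "nat \<Rightarrow> (nat \<times> nat \<times> nat \<times> nat) set" where
  "locations n = {0..<n} \<times> {0..<n} \<times> {0..<n} \<times> {0..<n}"

text \<open>Associated array: rows labelled (i,j), 1 <= i <= s, j in {1,2}; columns are locations.\<close>
definition assoc_array :: "nat \<Rightarrow> (nat \<Rightarrow> nat \<Rightarrow> nat \<Rightarrow> nat) \<Rightarrow> nat \<times> nat \<Rightarrow> nat \<times> nat \<times> nat \<times> nat \<Rightarrow> nat" where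
  "assoc_array n M = (\<lambda>(i,j) (x1,x2,x3,x4).
      if i = 1 then (if j = 1 then x1 else x2)
      else if i = 2 then (if j = 1 then x3 else x4)
      else (let v = M (i-2) (x1*n+x2) (x3*n+x4) in if j = 1 then v div n else v mod n))"

definition top_justified4 :: "nat \<Rightarrow> (nat \<times> nat) set \<Rightarrow> bool" where
  "top_justified4 s T \<longleftrightarrow> T \<subseteq> {1..s} \<times> {1,2} \<and> card T = 4 \<and> (\<forall>i. (i,2) \<in> T \<longrightarrow> (i,1) \<in> T)"

definition is_OOA4 :: "nat \<Rightarrow> nat \<Rightarrow> 'c set \<Rightarrow> (nat \<times> nat \<Rightarrow> 'c \<Rightarrow> nat) \<Rightarrow> bool" where
  "is_OOA4 s v Cols A \<longleftrightarrow>
     finite Cols \<and> card Cols = v^4 \<and>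
     (\<forall>r \<in> {1..s} \<times> {1,2}. \<forall>c \<in> Cols. A r c < v) \<and>
     (\<forall>T. top_justified4 s T \<longrightarrow>
        bij_betw (\<lambda>c. restrict (\<lambda>r. A r c) T) Cols (T \<rightarrow>\<^sub>E {0..<v}))"

definition strongly_orthogonal :: "nat \<Rightarrow> nat \<Rightarrow> (nat \<Rightarrow> nat \<Rightarrow> nat \<Rightarrow> nat) \<Rightarrow> bool" where
  "strongly_orthogonal n s M \<longleftrightarrow> is_OOA4 s n (locations n) (assoc_array n M)"

end

theory Submission
  imports Defs
begin

text \<open>
  Strong orthogonality says, by counting, that for every top-justified set \<open>T\<close> of four
  rows of the associated array, distinct locations have distinct columns on \<open>T\<close>.
  Identifying the cell \<open>(x1 n + x2, x3 n + x4)\<close> with the location \<open>(x1, x2, x3, x4)\<close> and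
  splitting every symbol into its radix and units digit, each Latin, sudoku and orthogonality
  condition of the theorem becomes an injectivity statement on locations, namely this
  separation property for one or several sets \<open>T\<close>. The top-justified four-sets fall into
  sixteen families according to which of them are coordinate rows; five families are
  automatic (the coordinate rows alone, the three families meeting one solution in both
  rows, and two solutions in both rows, which is their orthogonality), and the remaining
  eleven are exactly the listed conditions.
\<close>

section \<open>Injectivity and orthogonality\<close>

lemma bij_betw_iff_inj_on:
  assumes "finite B" "card A = card B" "f ` A \<subseteq> B"
  shows "bij_betw f A B \<longleftrightarrow> inj_on f A"
proof
  assume "inj_on f A"
  then have "card (f ` A) = card B" using assms(2) by (simp add: card_image)
  then have "f ` A = B" using assms(1,3) card_subset_eq by blast
  then show "bij_betw f A B" using \<open>inj_on f A\<close> by (simp add: bij_betw_def)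
qed (simp add: bij_betw_def)

lemma orth_on_iff_inj_on:
  assumes "finite A" "finite B" "card C = card A * card B"
    and "\<And>x. x \<in> C \<Longrightarrow> f x \<in> A" "\<And>x. x \<in> C \<Longrightarrow> g x \<in> B"
  shows "orth_on C A B f g \<longleftrightarrow> inj_on (\<lambda>x. (f x, g x)) C"
  unfolding orth_on_def using assms
  by (intro bij_betw_iff_inj_on) (auto simp: card_cartesian_product)

lemma inj_on_iff_same_kernel:
  assumes "\<And>x y. x \<in> A \<Longrightarrow> y \<in> A \<Longrightarrow> f x = f y \<longleftrightarrow> g x = g y"
  shows "inj_on f A \<longleftrightarrow> inj_on g A"
  using assms by (auto simp: inj_on_def)

lemma inj_on_keyed_iff: "inj_on (\<lambda>x. (key x, f x)) A \<longleftrightarrow> (\<forall>k. inj_on f {x \<in> A. key x = k})"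
  by (auto simp: inj_on_def)

lemma inj_on_rows_iff: "inj_on (\<lambda>(a, b). (a, f a b)) (A \<times> B) \<longleftrightarrow> (\<forall>a \<in> A. inj_on (f a) B)"
  by (auto simp: inj_on_def)

lemma inj_on_cols_iff: "inj_on (\<lambda>(a, b). (b, f a b)) (A \<times> B) \<longleftrightarrow> (\<forall>b \<in> B. inj_on (\<lambda>a. f a b) A)"
  by (auto simp: inj_on_def)

lemma inj_on_keyed_param_iff:
  assumes param: "\<And>k p. k \<in> K \<Longrightarrow> p \<in> P \<Longrightarrow> \<phi> k p \<in> A \<and> key (\<phi> k p) = k"
    and cover: "\<And>x. x \<in> A \<Longrightarrow> key x \<in> K \<and> (\<exists>p \<in> P. x = \<phi> (key x) p)"
    and inj: "\<And>k. k \<in> K \<Longrightarrow> inj_on (\<phi> k) P"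
  shows "inj_on (\<lambda>x. (key x, F x)) A \<longleftrightarrow> (\<forall>k \<in> K. inj_on (\<lambda>p. F (\<phi> k p)) P)"
proof
  assume keyed: "inj_on (\<lambda>x. (key x, F x)) A"
  show "\<forall>k \<in> K. inj_on (\<lambda>p. F (\<phi> k p)) P"
  proof (intro ballI inj_onI)
    fix k p q assume "k \<in> K" "p \<in> P" "q \<in> P" "F (\<phi> k p) = F (\<phi> k q)"
    then have "\<phi> k p = \<phi> k q" using param by (intro inj_onD[OF keyed]) auto
    then show "p = q" using inj \<open>k \<in> K\<close> \<open>p \<in> P\<close> \<open>q \<in> P\<close> by (auto dest: inj_onD)
  qed
next
  assume fibres: "\<forall>k \<in> K. inj_on (\<lambda>p. F (\<phi> k p)) P"
  show "inj_on (\<lambda>x. (key x, F x)) A"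
  proof (rule inj_onI)
    fix x y assume "x \<in> A" "y \<in> A" and same: "(key x, F x) = (key y, F y)"
    then obtain p q where "key x \<in> K" "p \<in> P" "q \<in> P" "x = \<phi> (key x) p" "y = \<phi> (key x) q"
      using cover by (metis prod.inject)
    with same fibres have "p = q" by (metis inj_onD prod.inject)
    then show "x = y" using \<open>x = _\<close> \<open>y = _\<close> by simp
  qed
qed

section \<open>Cells and locations\<close>

lemma digits_less_square: "a < n \<Longrightarrow> b < n \<Longrightarrow> a * n + b < (n::nat)^2"
proof -
  assume "a < n" "b < n"
  then have "a * n + b < (a + 1) * n" by simp
  also have "\<dots> \<le> n * n" using \<open>a < n\<close> by (intro mult_right_mono) auto
  finally show ?thesis by (simp add: power2_eq_square)
qed

lemma digits_eq_iff: "b < n \<Longrightarrow> d < (n::nat) \<Longrightarrow> a * n + b = c * n + d \<longleftrightarrow> a = c \<and> b = d"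
proof
  assume "b < n" "d < n" "a * n + b = c * n + d"
  then have "(a * n + b) div n = (c * n + d) div n" "(a * n + b) mod n = (c * n + d) mod n"
    by simp_all
  then show "a = c \<and> b = d" using \<open>b < n\<close> \<open>d < n\<close> by simp
qed auto

lemma div_less_of_less_square: "(m::nat) < n^2 \<Longrightarrow> m div n < n"
  by (simp add: power2_eq_square less_mult_imp_div_less)

definition cell :: "nat \<Rightarrow> nat \<times> nat \<times> nat \<times> nat \<Rightarrow> nat \<times> nat" where
  "cell n = (\<lambda>(x1, x2, x3, x4). (x1 * n + x2, x3 * n + x4))"

lemma bij_betw_cell: "bij_betw (cell n) (locations n) (grid n)"
proof (rule bij_betwI')
  fix x y assume "x \<in> locations n" "y \<in> locations n"
  then show "cell n x = cell n y \<longleftrightarrow> x = y"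
    by (auto simp: cell_def locations_def digits_eq_iff)
next
  fix x assume "x \<in> locations n"
  then show "cell n x \<in> grid n"
    by (auto simp: cell_def locations_def grid_def digits_less_square)
next
  fix p assume "p \<in> grid n"
  then obtain r c where p: "p = (r, c)" "r < n^2" "c < n^2" by (auto simp: grid_def)
  then have "n > 0" by (cases n) auto
  then show "\<exists>x \<in> locations n. p = cell n x"
    using p by (intro bexI[of _ "(r div n, r mod n, c div n, c mod n)"])
      (auto simp: cell_def locations_def div_less_of_less_square)
qed

lemma inj_on_grid_iff:
  "inj_on g (grid n) \<longleftrightarrow> inj_on (\<lambda>(x1, x2, x3, x4). g (x1 * n + x2, x3 * n + x4)) (locations n)"
proof -
  have "inj_on g (grid n) \<longleftrightarrow> inj_on (g \<circ> cell n) (locations n)"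
    using bij_betw_cell by (metis bij_betw_def comp_inj_on_iff)
  also have "g \<circ> cell n = (\<lambda>(x1, x2, x3, x4). g (x1 * n + x2, x3 * n + x4))"
    by (auto simp: cell_def)
  finally show ?thesis .
qed

lemma div_eq_iff_block: "0 < n \<Longrightarrow> (r::nat) div n = a \<longleftrightarrow> a * n \<le> r \<and> r < a * n + n"
  using dividend_less_div_times[of n r] by (auto intro!: div_nat_eqI simp: mult.commute)

lemma block_less_square: "a < n \<Longrightarrow> r < a * n + n \<Longrightarrow> r < (n::nat)^2"
  using digits_less_square[of a n "n - 1"] by simp

lemma large_row_eq: "a < n \<Longrightarrow> large_row n a = {p \<in> grid n. fst p div n = a}"
  by (auto simp: large_row_def grid_def div_eq_iff_block block_less_square)

lemma large_col_eq: "b < n \<Longrightarrow> large_col n b = {p \<in> grid n. snd p div n = b}"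
  by (auto simp: large_col_def grid_def div_eq_iff_block block_less_square)

lemma inj_on_large_rows_iff:
  "(\<forall>a<n. inj_on g (large_row n a)) \<longleftrightarrow>
     inj_on (\<lambda>(x1, x2, x3, x4). (x1, g (x1 * n + x2, x3 * n + x4))) (locations n)"
proof -
  have "{p \<in> grid n. fst p div n = a} = {}" if "\<not> a < n" for a
    using that by (auto simp: grid_def dest: div_less_of_less_square)
  then have "inj_on g {p \<in> grid n. fst p div n = a} \<longleftrightarrow> (a < n \<longrightarrow> inj_on g (large_row n a))" for a
    by (metis inj_on_empty large_row_eq)
  then have "(\<forall>a<n. inj_on g (large_row n a)) \<longleftrightarrow> inj_on (\<lambda>p. (fst p div n, g p)) (grid n)"
    by (simp add: inj_on_keyed_iff)
  also have "\<dots> \<longleftrightarrow> inj_on (\<lambda>(x1, x2, x3, x4). (x1, g (x1 * n + x2, x3 * n + x4))) (locations n)"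
    unfolding inj_on_grid_iff by (rule inj_on_cong) (auto simp: locations_def)
  finally show ?thesis .
qed

lemma inj_on_large_cols_iff:
  "(\<forall>b<n. inj_on g (large_col n b)) \<longleftrightarrow>
     inj_on (\<lambda>(x1, x2, x3, x4). (x3, g (x1 * n + x2, x3 * n + x4))) (locations n)"
proof -
  have "{p \<in> grid n. snd p div n = b} = {}" if "\<not> b < n" for b
    using that by (auto simp: grid_def dest: div_less_of_less_square)
  then have "inj_on g {p \<in> grid n. snd p div n = b} \<longleftrightarrow> (b < n \<longrightarrow> inj_on g (large_col n b))" for b
    by (metis inj_on_empty large_col_eq)
  then have "(\<forall>b<n. inj_on g (large_col n b)) \<longleftrightarrow> inj_on (\<lambda>p. (snd p div n, g p)) (grid n)"
    by (simp add: inj_on_keyed_iff)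
  also have "\<dots> \<longleftrightarrow> inj_on (\<lambda>(x1, x2, x3, x4). (x3, g (x1 * n + x2, x3 * n + x4))) (locations n)"
    unfolding inj_on_grid_iff by (rule inj_on_cong) (auto simp: locations_def)
  finally show ?thesis .
qed

lemma orth_on_grid_iff:
  assumes "finite A" "finite B" "card A * card B = n^2 * n^2"
    and "\<And>r c. r < n^2 \<Longrightarrow> c < n^2 \<Longrightarrow> F r c \<in> A" "\<And>r c. r < n^2 \<Longrightarrow> c < n^2 \<Longrightarrow> G r c \<in> B"
  shows "orth_on (grid n) A B (case_prod F) (case_prod G) \<longleftrightarrow>
    inj_on (\<lambda>(x1, x2, x3, x4). (F (x1 * n + x2) (x3 * n + x4), G (x1 * n + x2) (x3 * n + x4))) (locations n)"
proof -
  have "orth_on (grid n) A B (case_prod F) (case_prod G) \<longleftrightarrow>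
      inj_on (\<lambda>p. (case_prod F p, case_prod G p)) (grid n)"
    using assms by (intro orth_on_iff_inj_on) (auto simp: grid_def card_cartesian_product)
  then show ?thesis by (simp add: inj_on_grid_iff)
qed

lemma orth_on_large_rows_iff:
  assumes "finite A" "finite B" "card A * card B = n * n^2"
    and "\<And>r c. r < n^2 \<Longrightarrow> c < n^2 \<Longrightarrow> F r c \<in> A" "\<And>r c. r < n^2 \<Longrightarrow> c < n^2 \<Longrightarrow> G r c \<in> B"
  shows "(\<forall>a<n. orth_on (large_row n a) A B (case_prod F) (case_prod G)) \<longleftrightarrow>
    inj_on (\<lambda>(x1, x2, x3, x4). (x1, F (x1 * n + x2) (x3 * n + x4), G (x1 * n + x2) (x3 * n + x4))) (locations n)"
proof -
  have "orth_on (large_row n a) A B (case_prod F) (case_prod G) \<longleftrightarrow>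
      inj_on (\<lambda>p. (case_prod F p, case_prod G p)) (large_row n a)" if "a < n" for a
  proof (rule orth_on_iff_inj_on)
    show "card (large_row n a) = card A * card B"
      using assms(3) by (simp add: large_row_def card_cartesian_product)
    show "case_prod F p \<in> A" "case_prod G p \<in> B" if "p \<in> large_row n a" for p
      using assms(4,5) large_row_eq[OF \<open>a < n\<close>] that by (auto simp: grid_def)
  qed (use assms in simp_all)
  then show ?thesis by (simp add: inj_on_large_rows_iff)
qed

lemma orth_on_large_cols_iff:
  assumes "finite A" "finite B" "card A * card B = n * n^2"
    and "\<And>r c. r < n^2 \<Longrightarrow> c < n^2 \<Longrightarrow> F r c \<in> A" "\<And>r c. r < n^2 \<Longrightarrow> c < n^2 \<Longrightarrow> G r c \<in> B"
  shows "(\<forall>b<n. orth_on (large_col n b) A B (case_prod F) (case_prod G)) \<longleftrightarrow>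
    inj_on (\<lambda>(x1, x2, x3, x4). (x3, F (x1 * n + x2) (x3 * n + x4), G (x1 * n + x2) (x3 * n + x4))) (locations n)"
proof -
  have "orth_on (large_col n b) A B (case_prod F) (case_prod G) \<longleftrightarrow>
      inj_on (\<lambda>p. (case_prod F p, case_prod G p)) (large_col n b)" if "b < n" for b
  proof (rule orth_on_iff_inj_on)
    show "card (large_col n b) = card A * card B"
      using assms(3) by (simp add: large_col_def card_cartesian_product mult.commute)
    show "case_prod F p \<in> A" "case_prod G p \<in> B" if "p \<in> large_col n b" for p
      using assms(4,5) large_col_eq[OF \<open>b < n\<close>] that by (auto simp: grid_def)
  qed (use assms in simp_all)
  then show ?thesis by (simp add: inj_on_large_cols_iff)
qed

lemma inj_on_subsquares_iff:
  "(\<forall>a<n. \<forall>b<n. inj_on (\<lambda>(u, v). F (a, u, b, v)) ({0..<n} \<times> {0..<n})) \<longleftrightarrow>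
   inj_on (\<lambda>(x1, x2, x3, x4). ((x1, x3), F (x1, x2, x3, x4))) (locations n)"
proof -
  have "inj_on (\<lambda>x. (case x of (x1, x2, x3, x4) \<Rightarrow> (x1, x3), F x)) (locations n) \<longleftrightarrow>
      (\<forall>k \<in> {0..<n} \<times> {0..<n}. inj_on (\<lambda>p. F ((\<lambda>(a, b) (u, v). (a, u, b, v)) k p)) ({0..<n} \<times> {0..<n}))"
    by (rule inj_on_keyed_param_iff) (auto simp: locations_def inj_on_def)
  then show ?thesis by (simp add: split_def Ball_def imp_conjL)
qed

lemma sudoku_iff_inj_on:
  assumes "\<And>r c. r < n^2 \<Longrightarrow> c < n^2 \<Longrightarrow> L r c < n^2"
  shows "sudoku n L \<longleftrightarrow>
    inj_on (\<lambda>(x1, x2, x3, x4). (x1, x2, L (x1 * n + x2) (x3 * n + x4))) (locations n) \<and>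
    inj_on (\<lambda>(x1, x2, x3, x4). (x3, x4, L (x1 * n + x2) (x3 * n + x4))) (locations n) \<and>
    inj_on (\<lambda>(x1, x2, x3, x4). ((x1, x3), L (x1 * n + x2) (x3 * n + x4))) (locations n)"
proof -
  have rows_bij: "(\<forall>r<n^2. bij_betw (\<lambda>c. L r c) {0..<n^2} {0..<n^2}) \<longleftrightarrow>
      inj_on (\<lambda>(r, c). (r, L r c)) (grid n)"
    using assms by (auto simp: bij_betw_iff_inj_on image_subset_iff grid_def inj_on_rows_iff)
  have cols_bij: "(\<forall>c<n^2. bij_betw (\<lambda>r. L r c) {0..<n^2} {0..<n^2}) \<longleftrightarrow>
      inj_on (\<lambda>(r, c). (c, L r c)) (grid n)"
    using assms by (auto simp: bij_betw_iff_inj_on image_subset_iff grid_def inj_on_cols_iff)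
  have box_bij: "bij_betw (\<lambda>(u, v). L (a * n + u) (b * n + v)) ({0..<n} \<times> {0..<n}) {0..<n^2} \<longleftrightarrow>
      inj_on (\<lambda>(u, v). L (a * n + u) (b * n + v)) ({0..<n} \<times> {0..<n})" if "a < n" "b < n" for a b
    using assms that digits_less_square
    by (intro bij_betw_iff_inj_on) (auto simp: card_cartesian_product power2_eq_square)
  have rows: "inj_on (\<lambda>(r, c). (r, L r c)) (grid n) \<longleftrightarrow>
      inj_on (\<lambda>(x1, x2, x3, x4). (x1, x2, L (x1 * n + x2) (x3 * n + x4))) (locations n)"
    unfolding inj_on_grid_iff
    by (rule inj_on_iff_same_kernel) (auto simp: locations_def digits_eq_iff)
  have cols: "inj_on (\<lambda>(r, c). (c, L r c)) (grid n) \<longleftrightarrow>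
      inj_on (\<lambda>(x1, x2, x3, x4). (x3, x4, L (x1 * n + x2) (x3 * n + x4))) (locations n)"
    unfolding inj_on_grid_iff
    by (rule inj_on_iff_same_kernel) (auto simp: locations_def digits_eq_iff)
  show ?thesis
    unfolding sudoku_def rows_bij cols_bij rows cols
    using inj_on_subsquares_iff[of n "\<lambda>(x1, x2, x3, x4). L (x1 * n + x2) (x3 * n + x4)"]
    by (simp add: box_bij)
qed

lemma inj_on_latin_rows_iff:
  "(\<forall>a<n. \<forall>b<n. \<forall>u<n. inj_on (\<lambda>v. F (a, u, b, v)) {0..<n}) \<longleftrightarrow>
   inj_on (\<lambda>(x1, x2, x3, x4). ((x1, x3, x2), F (x1, x2, x3, x4))) (locations n)"
proof -
  have "inj_on (\<lambda>x. (case x of (x1, x2, x3, x4) \<Rightarrow> (x1, x3, x2), F x)) (locations n) \<longleftrightarrow>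
      (\<forall>k \<in> {0..<n} \<times> {0..<n} \<times> {0..<n}. inj_on (\<lambda>v. F ((\<lambda>(a, b, u) v. (a, u, b, v)) k v)) {0..<n})"
    by (rule inj_on_keyed_param_iff) (auto simp: locations_def inj_on_def)
  then show ?thesis by (simp add: split_def Ball_def imp_conjL)
qed

lemma inj_on_latin_cols_iff:
  "(\<forall>a<n. \<forall>b<n. \<forall>v<n. inj_on (\<lambda>u. F (a, u, b, v)) {0..<n}) \<longleftrightarrow>
   inj_on (\<lambda>(x1, x2, x3, x4). ((x1, x3, x4), F (x1, x2, x3, x4))) (locations n)"
proof -
  have "inj_on (\<lambda>x. (case x of (x1, x2, x3, x4) \<Rightarrow> (x1, x3, x4), F x)) (locations n) \<longleftrightarrow>
      (\<forall>k \<in> {0..<n} \<times> {0..<n} \<times> {0..<n}. inj_on (\<lambda>u. F ((\<lambda>(a, b, v) u. (a, u, b, v)) k u)) {0..<n})"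
    by (rule inj_on_keyed_param_iff) (auto simp: locations_def inj_on_def)
  then show ?thesis by (simp add: split_def Ball_def imp_conjL)
qed

lemma subsquares_latin_iff_inj_on:
  assumes "\<And>r c. r < n^2 \<Longrightarrow> c < n^2 \<Longrightarrow> L r c < n"
  shows "subsquares_latin n L \<longleftrightarrow>
    inj_on (\<lambda>(x1, x2, x3, x4). ((x1, x3, x2), L (x1 * n + x2) (x3 * n + x4))) (locations n) \<and>
    inj_on (\<lambda>(x1, x2, x3, x4). ((x1, x3, x4), L (x1 * n + x2) (x3 * n + x4))) (locations n)"
proof -
  have "bij_betw (\<lambda>v. L (a * n + u) (b * n + v)) {0..<n} {0..<n} \<longleftrightarrow>
      inj_on (\<lambda>v. L (a * n + u) (b * n + v)) {0..<n}"
    and "bij_betw (\<lambda>v. L (a * n + v) (b * n + u)) {0..<n} {0..<n} \<longleftrightarrow>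
      inj_on (\<lambda>v. L (a * n + v) (b * n + u)) {0..<n}"
    if "a < n" "b < n" "u < n" for a b u
    using assms that digits_less_square by (intro bij_betw_iff_inj_on; auto)+
  then show ?thesis
    using inj_on_latin_rows_iff[of n "\<lambda>(x1, x2, x3, x4). L (x1 * n + x2) (x3 * n + x4)"]
      inj_on_latin_cols_iff[of n "\<lambda>(x1, x2, x3, x4). L (x1 * n + x2) (x3 * n + x4)"]
    by (simp add: subsquares_latin_def imp_conjR all_conj_distrib)
qed

section \<open>Rows of the associated array\<close>

definition rows_separate :: "nat \<Rightarrow> (nat \<Rightarrow> nat \<Rightarrow> nat \<Rightarrow> nat) \<Rightarrow> (nat \<times> nat) set \<Rightarrow> bool" where
  "rows_separate n M T \<longleftrightarrow> inj_on (\<lambda>x. restrict (\<lambda>r. assoc_array n M r x) T) (locations n)"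

lemma rows_separate_iff_inj_on:
  assumes "\<And>x1 x2 x3 x4 y1 y2 y3 y4. x1 < n \<Longrightarrow> x2 < n \<Longrightarrow> x3 < n \<Longrightarrow> x4 < n \<Longrightarrow>
      y1 < n \<Longrightarrow> y2 < n \<Longrightarrow> y3 < n \<Longrightarrow> y4 < n \<Longrightarrow>
      f (x1, x2, x3, x4) = f (y1, y2, y3, y4) \<longleftrightarrow>
      (\<forall>r \<in> T. assoc_array n M r (x1, x2, x3, x4) = assoc_array n M r (y1, y2, y3, y4))"
  shows "rows_separate n M T \<longleftrightarrow> inj_on f (locations n)"
  unfolding rows_separate_def
proof (rule inj_on_iff_same_kernel)
  fix x y assume "x \<in> locations n" "y \<in> locations n"
  then show "restrict (\<lambda>r. assoc_array n M r x) T = restrict (\<lambda>r. assoc_array n M r y) T \<longleftrightarrow> f x = f y"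
    using assms by (auto simp: locations_def restrict_def fun_eq_iff)
qed

lemma sudoku_entry_less:
  assumes "sudoku n L" "r < n^2" "c < n^2"
  shows "L r c < n^2"
proof -
  have "bij_betw (L r) {0..<n^2} {0..<n^2}" using assms(1,2) by (simp add: sudoku_def)
  then show ?thesis using assms(3) by (auto dest: bij_betwE)
qed

lemma sudoku_entry_div_less: "sudoku n L \<Longrightarrow> r < n^2 \<Longrightarrow> c < n^2 \<Longrightarrow> L r c div n < n"
  by (simp add: sudoku_entry_less div_less_of_less_square)

lemma sudoku_digit_less:
  "sudoku n L \<Longrightarrow> x1 < n \<Longrightarrow> x2 < n \<Longrightarrow> x3 < n \<Longrightarrow> x4 < n \<Longrightarrow> L (x1 * n + x2) (x3 * n + x4) div n < n"
  by (simp add: sudoku_entry_div_less digits_less_square)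

lemma composite_less: "sudoku n Mi \<Longrightarrow> sudoku n Mj \<Longrightarrow> r < n^2 \<Longrightarrow> c < n^2 \<Longrightarrow> composite n Mi Mj r c < n^2"
  using digits_less_square[of "Mi r c div n" n "Mj r c div n"]
  by (simp add: composite_def radix_def sudoku_entry_div_less mult.commute)

lemma composite_eq_iff:
  assumes "Mj r c div n < n" "Mj r' c' div n < n"
  shows "composite n Mi Mj r c = composite n Mi Mj r' c' \<longleftrightarrow>
    Mi r c div n = Mi r' c' div n \<and> Mj r c div n = Mj r' c' div n"
  using assms digits_eq_iff by (simp add: composite_def radix_def mult.commute)

lemma div_mod_eq_iff: "(x::nat) div n = y div n \<and> x mod n = y mod n \<longleftrightarrow> x = y"
  by (metis div_mult_mod_eq)

lemma div_mod_eq_conj_iff: "(x::nat) div n = y div n \<and> x mod n = y mod n \<and> P \<longleftrightarrow> x = y \<and> P"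
  using div_mod_eq_iff by blast

lemma assoc_array_less:
  assumes sud: "\<forall>i \<in> {1..s-2}. sudoku n (M i)" and "r \<in> {1..s} \<times> {1, 2}" "x \<in> locations n"
  shows "assoc_array n M r x < n"
proof -
  obtain i j x1 x2 x3 x4 where r: "r = (i, j)" "1 \<le> i" "i \<le> s" "j \<in> {1, 2}"
    and x: "x = (x1, x2, x3, x4)" "x1 < n" "x2 < n" "x3 < n" "x4 < n"
    using assms(2,3) by (auto simp: locations_def)
  show ?thesis
  proof (cases "i \<le> 2")
    case True
    then show ?thesis using r x by (auto simp: assoc_array_def)
  next
    case False
    then have "i - 2 \<in> {1..s-2}" using r by auto
    then have "sudoku n (M (i - 2))" using sud by blast
    then show ?thesis
      using r x False sudoku_digit_less[of n "M (i - 2)" x1 x2 x3 x4] by (auto simp: assoc_array_def)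
  qed
qed

lemma strongly_orthogonal_iff_rows_separate:
  assumes "\<forall>i \<in> {1..s-2}. sudoku n (M i)"
  shows "strongly_orthogonal n s M \<longleftrightarrow> (\<forall>T. top_justified4 s T \<longrightarrow> rows_separate n M T)"
proof -
  have card: "card (locations n) = n^4"
    by (simp add: locations_def card_cartesian_product power4_eq_xxxx)
  have "bij_betw (\<lambda>x. restrict (\<lambda>r. assoc_array n M r x) T) (locations n) (T \<rightarrow>\<^sub>E {0..<n}) \<longleftrightarrow>
      rows_separate n M T" if "top_justified4 s T" for T
  proof -
    have T: "T \<subseteq> {1..s} \<times> {1, 2}" "card T = 4" using that by (auto simp: top_justified4_def)
    then have "finite T" by (meson finite_SigmaI finite_atLeastAtMost finite_insert finite.emptyI finite_subset)
    then show ?thesis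
      unfolding rows_separate_def using T card assoc_array_less[OF assms]
      by (intro bij_betw_iff_inj_on) (auto simp: card_PiE finite_PiE PiE_iff)
  qed
  then show ?thesis
    unfolding strongly_orthogonal_def is_OOA4_def
    using card assoc_array_less[OF assms] by (auto simp: locations_def)
qed

lemma coordinate_rows_separate: "rows_separate n M {(1, 1), (1, 2), (2, 1), (2, 2)}"
  by (subst rows_separate_iff_inj_on[where f = id]) (auto simp: assoc_array_def)

lemma sudoku_rows_separate:
  assumes "sudoku n (M i)" "0 < i"
  shows "rows_separate n M {(1, 1), (1, 2), (i + 2, 1), (i + 2, 2)}"
    and "rows_separate n M {(2, 1), (2, 2), (i + 2, 1), (i + 2, 2)}"
    and "rows_separate n M {(i + 2, 1), (i + 2, 2), (1, 1), (2, 1)}"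
proof -
  have inj: "inj_on (\<lambda>(x1, x2, x3, x4). (x1, x2, M i (x1 * n + x2) (x3 * n + x4))) (locations n)"
    "inj_on (\<lambda>(x1, x2, x3, x4). (x3, x4, M i (x1 * n + x2) (x3 * n + x4))) (locations n)"
    "inj_on (\<lambda>(x1, x2, x3, x4). ((x1, x3), M i (x1 * n + x2) (x3 * n + x4))) (locations n)"
    using assms(1) sudoku_iff_inj_on[of n "M i"] sudoku_entry_less by blast+
  show "rows_separate n M {(1, 1), (1, 2), (i + 2, 1), (i + 2, 2)}"
    using assms(2) by (intro rows_separate_iff_inj_on[THEN iffD2, OF _ inj(1)])
      (auto simp: assoc_array_def div_mod_eq_iff)
  show "rows_separate n M {(2, 1), (2, 2), (i + 2, 1), (i + 2, 2)}"
    using assms(2) by (intro rows_separate_iff_inj_on[THEN iffD2, OF _ inj(2)])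
      (auto simp: assoc_array_def div_mod_eq_iff)
  show "rows_separate n M {(i + 2, 1), (i + 2, 2), (1, 1), (2, 1)}"
    using assms(2) by (intro rows_separate_iff_inj_on[THEN iffD2, OF _ inj(3)])
      (auto simp: assoc_array_def div_mod_eq_conj_iff)
qed

lemma orth_rows_separate:
  assumes "sudoku n (M i)" "sudoku n (M j)" "0 < i" "0 < j"
    and "orth_on (grid n) {0..<n^2} {0..<n^2} (case_prod (M i)) (case_prod (M j))"
  shows "rows_separate n M {(i + 2, 1), (i + 2, 2), (j + 2, 1), (j + 2, 2)}"
proof -
  have inj: "inj_on (\<lambda>(x1, x2, x3, x4). (M i (x1 * n + x2) (x3 * n + x4), M j (x1 * n + x2) (x3 * n + x4)))
      (locations n)"
    using assms(5) by (subst (asm) orth_on_grid_iff) (simp_all add: assms(1,2) sudoku_entry_less)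
  show ?thesis
    using assms(3,4) by (intro rows_separate_iff_inj_on[THEN iffD2, OF _ inj])
      (auto simp: assoc_array_def div_mod_eq_iff div_mod_eq_conj_iff)
qed

lemma subsquares_latin_radix_iff:
  assumes "sudoku n (M i)" "0 < i"
  shows "subsquares_latin n (radix n (M i)) \<longleftrightarrow>
    rows_separate n M {(1, 1), (1, 2), (2, 1), (i + 2, 1)} \<and>
    rows_separate n M {(2, 1), (2, 2), (1, 1), (i + 2, 1)}"
proof -
  have "subsquares_latin n (radix n (M i)) \<longleftrightarrow>
      inj_on (\<lambda>(x1, x2, x3, x4). ((x1, x3, x2), radix n (M i) (x1 * n + x2) (x3 * n + x4))) (locations n) \<and>
      inj_on (\<lambda>(x1, x2, x3, x4). ((x1, x3, x4), radix n (M i) (x1 * n + x2) (x3 * n + x4))) (locations n)"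
    by (rule subsquares_latin_iff_inj_on) (simp add: assms radix_def sudoku_entry_div_less)
  also have "\<dots> \<longleftrightarrow> rows_separate n M {(1, 1), (1, 2), (2, 1), (i + 2, 1)} \<and>
      rows_separate n M {(2, 1), (2, 2), (1, 1), (i + 2, 1)}"
    using assms by (intro conj_cong rows_separate_iff_inj_on[symmetric]) (auto simp: assoc_array_def radix_def)
  finally show ?thesis .
qed

lemma sudoku_composite_iff:
  assumes "sudoku n (M i)" "sudoku n (M j)" "0 < i" "0 < j"
  shows "sudoku n (composite n (M i) (M j)) \<longleftrightarrow>
    rows_separate n M {(1, 1), (1, 2), (i + 2, 1), (j + 2, 1)} \<and>
    rows_separate n M {(2, 1), (2, 2), (i + 2, 1), (j + 2, 1)} \<and>
    rows_separate n M {(1, 1), (2, 1), (i + 2, 1), (j + 2, 1)}"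
    (is "_ \<longleftrightarrow> ?rhs")
proof -
  let ?N = "composite n (M i) (M j)"
  have "sudoku n ?N \<longleftrightarrow>
      inj_on (\<lambda>(x1, x2, x3, x4). (x1, x2, ?N (x1 * n + x2) (x3 * n + x4))) (locations n) \<and>
      inj_on (\<lambda>(x1, x2, x3, x4). (x3, x4, ?N (x1 * n + x2) (x3 * n + x4))) (locations n) \<and>
      inj_on (\<lambda>(x1, x2, x3, x4). ((x1, x3), ?N (x1 * n + x2) (x3 * n + x4))) (locations n)"
    by (rule sudoku_iff_inj_on) (simp add: assms composite_less)
  also have "\<dots> \<longleftrightarrow> ?rhs"
    using assms
    by (intro conj_cong rows_separate_iff_inj_on[symmetric])
      (auto simp: assoc_array_def composite_eq_iff sudoku_digit_less)
  finally show ?thesis .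
qed

lemma large_rows_orth_radix_iff:
  assumes "sudoku n (M i)" "sudoku n (M j)" "0 < i" "0 < j"
  shows "(\<forall>a<n. orth_on (large_row n a) {0..<n} {0..<n^2} (case_prod (radix n (M i))) (case_prod (M j))) \<longleftrightarrow>
    rows_separate n M {(j + 2, 1), (j + 2, 2), (1, 1), (i + 2, 1)}"
proof -
  have "(\<forall>a<n. orth_on (large_row n a) {0..<n} {0..<n^2} (case_prod (radix n (M i))) (case_prod (M j))) \<longleftrightarrow>
      inj_on (\<lambda>(x1, x2, x3, x4).
        (x1, radix n (M i) (x1 * n + x2) (x3 * n + x4), M j (x1 * n + x2) (x3 * n + x4))) (locations n)"
    by (rule orth_on_large_rows_iff) (simp_all add: assms radix_def sudoku_entry_div_less sudoku_entry_less)
  also have "\<dots> \<longleftrightarrow> rows_separate n M {(j + 2, 1), (j + 2, 2), (1, 1), (i + 2, 1)}"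
    using assms
    by (intro rows_separate_iff_inj_on[symmetric]) (auto simp: assoc_array_def radix_def div_mod_eq_conj_iff)
  finally show ?thesis .
qed

lemma large_cols_orth_radix_iff:
  assumes "sudoku n (M i)" "sudoku n (M j)" "0 < i" "0 < j"
  shows "(\<forall>b<n. orth_on (large_col n b) {0..<n} {0..<n^2} (case_prod (radix n (M i))) (case_prod (M j))) \<longleftrightarrow>
    rows_separate n M {(j + 2, 1), (j + 2, 2), (2, 1), (i + 2, 1)}"
proof -
  have "(\<forall>b<n. orth_on (large_col n b) {0..<n} {0..<n^2} (case_prod (radix n (M i))) (case_prod (M j))) \<longleftrightarrow>
      inj_on (\<lambda>(x1, x2, x3, x4).
        (x3, radix n (M i) (x1 * n + x2) (x3 * n + x4), M j (x1 * n + x2) (x3 * n + x4))) (locations n)"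
    by (rule orth_on_large_cols_iff) (simp_all add: assms radix_def sudoku_entry_div_less sudoku_entry_less)
  also have "\<dots> \<longleftrightarrow> rows_separate n M {(j + 2, 1), (j + 2, 2), (2, 1), (i + 2, 1)}"
    using assms
    by (intro rows_separate_iff_inj_on[symmetric]) (auto simp: assoc_array_def radix_def div_mod_eq_conj_iff)
  finally show ?thesis .
qed

lemma large_rows_orth_composite_iff:
  assumes "sudoku n (M i)" "sudoku n (M j)" "sudoku n (M k)" "0 < i" "0 < j" "0 < k"
  shows "(\<forall>a<n. orth_on (large_row n a) {0..<n^2} {0..<n}
      (case_prod (composite n (M i) (M j))) (case_prod (radix n (M k)))) \<longleftrightarrow>
    rows_separate n M {(1, 1), (i + 2, 1), (j + 2, 1), (k + 2, 1)}"
proof -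
  have "(\<forall>a<n. orth_on (large_row n a) {0..<n^2} {0..<n}
      (case_prod (composite n (M i) (M j))) (case_prod (radix n (M k)))) \<longleftrightarrow>
      inj_on (\<lambda>(x1, x2, x3, x4). (x1, composite n (M i) (M j) (x1 * n + x2) (x3 * n + x4),
        radix n (M k) (x1 * n + x2) (x3 * n + x4))) (locations n)"
    by (rule orth_on_large_rows_iff) (simp_all add: assms composite_less radix_def sudoku_entry_div_less)
  also have "\<dots> \<longleftrightarrow> rows_separate n M {(1, 1), (i + 2, 1), (j + 2, 1), (k + 2, 1)}"
    using assms
    by (intro rows_separate_iff_inj_on[symmetric])
      (auto simp: assoc_array_def radix_def composite_eq_iff sudoku_digit_less)
  finally show ?thesis .
qed

lemma large_cols_orth_composite_iff:
  assumes "sudoku n (M i)" "sudoku n (M j)" "sudoku n (M k)" "0 < i" "0 < j" "0 < k"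
  shows "(\<forall>b<n. orth_on (large_col n b) {0..<n^2} {0..<n}
      (case_prod (composite n (M i) (M j))) (case_prod (radix n (M k)))) \<longleftrightarrow>
    rows_separate n M {(2, 1), (i + 2, 1), (j + 2, 1), (k + 2, 1)}"
proof -
  have "(\<forall>b<n. orth_on (large_col n b) {0..<n^2} {0..<n}
      (case_prod (composite n (M i) (M j))) (case_prod (radix n (M k)))) \<longleftrightarrow>
      inj_on (\<lambda>(x1, x2, x3, x4). (x3, composite n (M i) (M j) (x1 * n + x2) (x3 * n + x4),
        radix n (M k) (x1 * n + x2) (x3 * n + x4))) (locations n)"
    by (rule orth_on_large_cols_iff) (simp_all add: assms composite_less radix_def sudoku_entry_div_less)
  also have "\<dots> \<longleftrightarrow> rows_separate n M {(2, 1), (i + 2, 1), (j + 2, 1), (k + 2, 1)}"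
    using assms
    by (intro rows_separate_iff_inj_on[symmetric])
      (auto simp: assoc_array_def radix_def composite_eq_iff sudoku_digit_less)
  finally show ?thesis .
qed

lemma orth_composite_sudoku_iff:
  assumes "sudoku n (M i)" "sudoku n (M j)" "sudoku n (M k)" "0 < i" "0 < j" "0 < k"
  shows "orth_on (grid n) {0..<n^2} {0..<n^2} (case_prod (composite n (M i) (M j))) (case_prod (M k)) \<longleftrightarrow>
    rows_separate n M {(k + 2, 1), (k + 2, 2), (i + 2, 1), (j + 2, 1)}"
proof -
  have "orth_on (grid n) {0..<n^2} {0..<n^2} (case_prod (composite n (M i) (M j))) (case_prod (M k)) \<longleftrightarrow>
      inj_on (\<lambda>(x1, x2, x3, x4). (composite n (M i) (M j) (x1 * n + x2) (x3 * n + x4),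
        M k (x1 * n + x2) (x3 * n + x4))) (locations n)"
    by (rule orth_on_grid_iff) (simp_all add: assms composite_less sudoku_entry_less)
  also have "\<dots> \<longleftrightarrow> rows_separate n M {(k + 2, 1), (k + 2, 2), (i + 2, 1), (j + 2, 1)}"
    using assms
    by (intro rows_separate_iff_inj_on[symmetric])
      (auto simp: assoc_array_def composite_eq_iff sudoku_digit_less div_mod_eq_conj_iff)
  finally show ?thesis .
qed

lemma orth_composites_iff:
  assumes "sudoku n (M i)" "sudoku n (M j)" "sudoku n (M k)" "sudoku n (M l)"
    and "0 < i" "0 < j" "0 < k" "0 < l"
  shows "orth_on (grid n) {0..<n^2} {0..<n^2}
      (case_prod (composite n (M i) (M j))) (case_prod (composite n (M k) (M l))) \<longleftrightarrow>
    rows_separate n M {(i + 2, 1), (j + 2, 1), (k + 2, 1), (l + 2, 1)}"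
proof -
  have "orth_on (grid n) {0..<n^2} {0..<n^2}
      (case_prod (composite n (M i) (M j))) (case_prod (composite n (M k) (M l))) \<longleftrightarrow>
      inj_on (\<lambda>(x1, x2, x3, x4). (composite n (M i) (M j) (x1 * n + x2) (x3 * n + x4),
        composite n (M k) (M l) (x1 * n + x2) (x3 * n + x4))) (locations n)"
    by (rule orth_on_grid_iff) (simp_all add: assms composite_less)
  also have "\<dots> \<longleftrightarrow> rows_separate n M {(i + 2, 1), (j + 2, 1), (k + 2, 1), (l + 2, 1)}"
    using assms
    by (intro rows_separate_iff_inj_on[symmetric])
      (auto simp: assoc_array_def composite_eq_iff sudoku_digit_less)
  finally show ?thesis .
qed


section \<open>Top-justified sets of four rows\<close>

lemma sorted_list_of_finite:
  fixes A :: "nat set"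
  assumes "finite A"
  obtains xs where "sorted_wrt (<) xs" "set xs = A" "length xs = card A"
  using assms strict_sorted_list_of_set set_sorted_list_of_set length_sorted_list_of_set by blast

lemma top_justified4_cases:
  assumes "top_justified4 s T"
  obtains (two_pairs) i j where "1 \<le> i" "i < j" "i \<le> s" "j \<le> s" "i \<noteq> j"
      "T = {(i, 1), (i, 2), (j, 1), (j, 2)}"
  | (pair_two_singles) i j k where "1 \<le> i" "1 \<le> j" "j < k" "i \<le> s" "j \<le> s" "k \<le> s"
      "i \<noteq> j" "i \<noteq> k" "j \<noteq> k" "T = {(i, 1), (i, 2), (j, 1), (k, 1)}"
  | (four_singles) i j k l where "1 \<le> i" "i < j" "j < k" "k < l" "i \<le> s" "j \<le> s" "k \<le> s" "l \<le> s"
      "distinct [i, j, k, l]" "T = {(i, 1), (j, 1), (k, 1), (l, 1)}"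
proof -
  define I where "I = {i. (i, 1) \<in> T}"
  define J where "J = {i. (i, 2) \<in> T}"
  have T_sub: "T \<subseteq> {1..s} \<times> {1, 2}" and "card T = 4" and top: "\<forall>i. (i, 2) \<in> T \<longrightarrow> (i, 1) \<in> T"
    using assms by (auto simp: top_justified4_def)
  have T_eq: "T = I \<times> {1} \<union> J \<times> {2}" using T_sub unfolding I_def J_def by blast
  have I_sub: "I \<subseteq> {1..s}" and "J \<subseteq> I" using T_sub top unfolding I_def J_def by blast+
  have "finite I" by (rule finite_subset[OF I_sub]) simp
  then have fin: "finite I" "finite J" using finite_subset[OF \<open>J \<subseteq> I\<close>] by auto
  have "card T = card (I \<times> {1::nat}) + card (J \<times> {2::nat})"
    unfolding T_eq using fin by (intro card_Un_disjoint) auto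
  then have card_sum: "card I + card J = 4" using \<open>card T = 4\<close> by (simp add: card_cartesian_product)
  have "card J \<le> card I" using card_mono[OF fin(1) \<open>J \<subseteq> I\<close>] .
  then consider "card J = 2" | "card J = 1" | "card J = 0" using card_sum by linarith
  then show thesis
  proof cases
    case 1
    then have "card I = 2" using card_sum by simp
    then have "J = I" using card_subset_eq[OF fin(1) \<open>J \<subseteq> I\<close>] 1 by simp
    obtain xs where "sorted_wrt (<) xs" "set xs = I" "length xs = 2"
      using sorted_list_of_finite[OF fin(1)] \<open>card I = 2\<close> by metis
    then obtain i j where "i < j" "I = {i, j}"
      by (auto simp: numeral_eq_Suc length_Suc_conv)
    show thesis
    proof (rule two_pairs[of i j])
      show "T = {(i, 1), (i, 2), (j, 1), (j, 2)}" using T_eq \<open>J = I\<close> \<open>I = {i, j}\<close> by auto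
    qed (use \<open>i < j\<close> \<open>I = {i, j}\<close> I_sub in auto)
  next
    case 2
    then obtain i where J: "J = {i}" by (auto simp: card_1_singleton_iff)
    have "i \<in> I" using J \<open>J \<subseteq> I\<close> by auto
    have "card (I - {i}) = 2" using card_sum 2 fin \<open>i \<in> I\<close> by simp
    then obtain xs where "sorted_wrt (<) xs" "set xs = I - {i}" "length xs = 2"
      using sorted_list_of_finite[of "I - {i}"] fin by auto
    then obtain j k where "j < k" "I - {i} = {j, k}"
      by (auto simp: numeral_eq_Suc length_Suc_conv)
    then have I: "I = {i, j, k}" "i \<noteq> j" "i \<noteq> k" using \<open>i \<in> I\<close> by auto
    show thesis
    proof (rule pair_two_singles[of i j k])
      show "T = {(i, 1), (i, 2), (j, 1), (k, 1)}" using T_eq J I by auto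
    qed (use \<open>j < k\<close> I I_sub in auto)
  next
    case 3
    then have "J = {}" using fin by simp
    obtain xs where "sorted_wrt (<) xs" "set xs = I" "length xs = 4"
      using sorted_list_of_finite[OF fin(1)] 3 card_sum by auto
    then obtain i j k l where "i < j" "j < k" "k < l" and I: "I = {i, j, k, l}"
      by (auto simp: numeral_eq_Suc length_Suc_conv)
    show thesis
    proof (rule four_singles[of i j k l])
      show "T = {(i, 1), (j, 1), (k, 1), (l, 1)}" using T_eq \<open>J = {}\<close> I by auto
    qed (use \<open>i < j\<close> \<open>j < k\<close> \<open>k < l\<close> I I_sub in auto)
  qed
qed

lemma row_index_cases:
  fixes i :: nat
  assumes "1 \<le> i"
  obtains "i = 1" | "i = 2" | "2 < i"
  using assms by linarith

lemma row_index_pair_cases: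
  fixes j k :: nat
  assumes "1 \<le> j" "j < k"
  obtains "j = 1" "k = 2" | "j = 1" "2 < k" | "j = 2" "2 < k" | "2 < j" "2 < k"
  using assms by linarith

lemma shifted_index:
  fixes m s :: nat
  assumes "2 < m"
  shows "m \<le> s \<Longrightarrow> m - 2 \<in> {1..s-2}" and "m - 2 + 2 = m"
    and "2 < m' \<Longrightarrow> m \<noteq> m' \<Longrightarrow> m - 2 \<noteq> m' - 2"
  using assms by auto

lemma top_justified4_families:
  fixes P :: "(nat \<times> nat) set \<Rightarrow> bool" and s :: nat
  assumes coordinates: "P {(1, 1), (1, 2), (2, 1), (2, 2)}"
    and symbol: "\<And>m. 2 < m \<Longrightarrow> m \<le> s \<Longrightarrow> P {(1, 1), (1, 2), (m, 1), (m, 2)}"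
      "\<And>m. 2 < m \<Longrightarrow> m \<le> s \<Longrightarrow> P {(2, 1), (2, 2), (m, 1), (m, 2)}"
      "\<And>m. 2 < m \<Longrightarrow> m \<le> s \<Longrightarrow> P {(m, 1), (m, 2), (1, 1), (2, 1)}"
    and symbols: "\<And>i j. 2 < i \<Longrightarrow> i \<le> s \<Longrightarrow> 2 < j \<Longrightarrow> j \<le> s \<Longrightarrow> i \<noteq> j \<Longrightarrow>
      P {(i, 1), (i, 2), (j, 1), (j, 2)}"
    and latin: "\<And>m. 2 < m \<Longrightarrow> m \<le> s \<Longrightarrow> P {(1, 1), (1, 2), (2, 1), (m, 1)}"
      "\<And>m. 2 < m \<Longrightarrow> m \<le> s \<Longrightarrow> P {(2, 1), (2, 2), (1, 1), (m, 1)}"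
    and pairs: "\<And>i j. 2 < i \<Longrightarrow> i \<le> s \<Longrightarrow> 2 < j \<Longrightarrow> j \<le> s \<Longrightarrow> i \<noteq> j \<Longrightarrow>
        P {(1, 1), (1, 2), (i, 1), (j, 1)}"
      "\<And>i j. 2 < i \<Longrightarrow> i \<le> s \<Longrightarrow> 2 < j \<Longrightarrow> j \<le> s \<Longrightarrow> i \<noteq> j \<Longrightarrow>
        P {(2, 1), (2, 2), (i, 1), (j, 1)}"
      "\<And>i j. 2 < i \<Longrightarrow> i \<le> s \<Longrightarrow> 2 < j \<Longrightarrow> j \<le> s \<Longrightarrow> i \<noteq> j \<Longrightarrow>
        P {(1, 1), (2, 1), (i, 1), (j, 1)}"
      "\<And>i j. 2 < i \<Longrightarrow> i \<le> s \<Longrightarrow> 2 < j \<Longrightarrow> j \<le> s \<Longrightarrow> i \<noteq> j \<Longrightarrow>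
        P {(j, 1), (j, 2), (1, 1), (i, 1)}"
      "\<And>i j. 2 < i \<Longrightarrow> i \<le> s \<Longrightarrow> 2 < j \<Longrightarrow> j \<le> s \<Longrightarrow> i \<noteq> j \<Longrightarrow>
        P {(j, 1), (j, 2), (2, 1), (i, 1)}"
    and triples: "\<And>i j k. 2 < i \<Longrightarrow> i \<le> s \<Longrightarrow> 2 < j \<Longrightarrow> j \<le> s \<Longrightarrow> 2 < k \<Longrightarrow> k \<le> s \<Longrightarrow>
        i \<noteq> j \<Longrightarrow> i \<noteq> k \<Longrightarrow> j \<noteq> k \<Longrightarrow> P {(1, 1), (i, 1), (j, 1), (k, 1)}"
      "\<And>i j k. 2 < i \<Longrightarrow> i \<le> s \<Longrightarrow> 2 < j \<Longrightarrow> j \<le> s \<Longrightarrow> 2 < k \<Longrightarrow> k \<le> s \<Longrightarrow>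
        i \<noteq> j \<Longrightarrow> i \<noteq> k \<Longrightarrow> j \<noteq> k \<Longrightarrow> P {(2, 1), (i, 1), (j, 1), (k, 1)}"
      "\<And>i j k. 2 < i \<Longrightarrow> i \<le> s \<Longrightarrow> 2 < j \<Longrightarrow> j \<le> s \<Longrightarrow> 2 < k \<Longrightarrow> k \<le> s \<Longrightarrow>
        i \<noteq> j \<Longrightarrow> i \<noteq> k \<Longrightarrow> j \<noteq> k \<Longrightarrow> P {(k, 1), (k, 2), (i, 1), (j, 1)}"
    and quadruples: "\<And>i j k l. 2 < i \<Longrightarrow> i \<le> s \<Longrightarrow> 2 < j \<Longrightarrow> j \<le> s \<Longrightarrow> 2 < k \<Longrightarrow> k \<le> s \<Longrightarrow>
        2 < l \<Longrightarrow> l \<le> s \<Longrightarrow> distinct [i, j, k, l] \<Longrightarrow> P {(i, 1), (j, 1), (k, 1), (l, 1)}"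
    and "top_justified4 s T"
  shows "P T"
  using \<open>top_justified4 s T\<close>
proof (cases rule: top_justified4_cases)
  case (two_pairs i j)
  from two_pairs(1,2) show ?thesis
  proof (cases rule: row_index_pair_cases)
    case 1 with two_pairs(6) coordinates show ?thesis by simp
  next
    case 2 with two_pairs(4,6) symbol(1)[of j] show ?thesis by simp
  next
    case 3 with two_pairs(4,6) symbol(2)[of j] show ?thesis by simp
  next
    case 4 with two_pairs(3-6) symbols[of i j] show ?thesis by simp
  qed
next
  case (pair_two_singles i j k)
  note facts = pair_two_singles(4-10)
  from pair_two_singles(2,3) show ?thesis
  proof (cases rule: row_index_pair_cases)
    case 1
    from pair_two_singles(1) show ?thesis
      by (cases rule: row_index_cases) (use 1 facts symbol(3)[of i] in simp_all)
  next
    case 2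
    from pair_two_singles(1) show ?thesis
      by (cases rule: row_index_cases) (use 2 facts latin(2)[of k] pairs(4)[of k i] in simp_all)
  next
    case 3
    from pair_two_singles(1) show ?thesis
      by (cases rule: row_index_cases) (use 3 facts latin(1)[of k] pairs(5)[of k i] in simp_all)
  next
    case 4
    from pair_two_singles(1) show ?thesis
      by (cases rule: row_index_cases)
        (use 4 facts pairs(1)[of j k] pairs(2)[of j k] triples(3)[of j k i] in simp_all)
  qed
next
  case (four_singles i j k l)
  note facts = four_singles(5-10)
  from four_singles(1,2) show ?thesis
  proof (cases rule: row_index_pair_cases)
    case 1 with four_singles(3,4) facts pairs(3)[of k l] show ?thesis by simp
  next
    case 2 with four_singles(3,4) facts triples(1)[of j k l] show ?thesis by simp
  next
    case 3 with four_singles(3,4) facts triples(2)[of j k l] show ?thesis by simp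
  next
    case 4 with four_singles(3,4) facts quadruples[of i j k l] show ?thesis by simp
  qed
qed

lemma all_top_justified4_iff:
  fixes P :: "(nat \<times> nat) set \<Rightarrow> bool"
  assumes coordinates: "P {(1, 1), (1, 2), (2, 1), (2, 2)}"
    and symbol: "\<And>i. i \<in> {1..s-2} \<Longrightarrow>
      P {(1, 1), (1, 2), (i + 2, 1), (i + 2, 2)} \<and> P {(2, 1), (2, 2), (i + 2, 1), (i + 2, 2)} \<and>
      P {(i + 2, 1), (i + 2, 2), (1, 1), (2, 1)}"
    and symbols: "\<And>i j. i \<in> {1..s-2} \<Longrightarrow> j \<in> {1..s-2} \<Longrightarrow> i \<noteq> j \<Longrightarrow>
      P {(i + 2, 1), (i + 2, 2), (j + 2, 1), (j + 2, 2)}"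
  shows "(\<forall>T. top_justified4 s T \<longrightarrow> P T) \<longleftrightarrow>
    (\<forall>i \<in> {1..s-2}. P {(1, 1), (1, 2), (2, 1), (i + 2, 1)} \<and> P {(2, 1), (2, 2), (1, 1), (i + 2, 1)}) \<and>
    (\<forall>i \<in> {1..s-2}. \<forall>j \<in> {1..s-2}. i \<noteq> j \<longrightarrow>
      (P {(1, 1), (1, 2), (i + 2, 1), (j + 2, 1)} \<and> P {(2, 1), (2, 2), (i + 2, 1), (j + 2, 1)} \<and>
       P {(1, 1), (2, 1), (i + 2, 1), (j + 2, 1)}) \<and>
      P {(j + 2, 1), (j + 2, 2), (1, 1), (i + 2, 1)} \<and> P {(j + 2, 1), (j + 2, 2), (2, 1), (i + 2, 1)}) \<and>
    (\<forall>i \<in> {1..s-2}. \<forall>j \<in> {1..s-2}. \<forall>k \<in> {1..s-2}. i \<noteq> j \<and> i \<noteq> k \<and> j \<noteq> k \<longrightarrow>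
      P {(1, 1), (i + 2, 1), (j + 2, 1), (k + 2, 1)} \<and> P {(2, 1), (i + 2, 1), (j + 2, 1), (k + 2, 1)} \<and>
      P {(k + 2, 1), (k + 2, 2), (i + 2, 1), (j + 2, 1)}) \<and>
    (\<forall>i \<in> {1..s-2}. \<forall>j \<in> {1..s-2}. \<forall>k \<in> {1..s-2}. \<forall>l \<in> {1..s-2}. distinct [i, j, k, l] \<longrightarrow>
      P {(i + 2, 1), (j + 2, 1), (k + 2, 1), (l + 2, 1)})"
  (is "_ \<longleftrightarrow> ?listed")
proof
  assume all: "\<forall>T. top_justified4 s T \<longrightarrow> P T"
  have top_justified: "P T"
    if "T \<subseteq> {1..s} \<times> {1, 2}" "card T = 4" "\<forall>i. (i, 2) \<in> T \<longrightarrow> (i, 1) \<in> T" for T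
    using all that by (simp add: top_justified4_def)
  show ?listed
    by (intro conjI ballI impI top_justified) (auto simp: card_insert_if)
next
  assume listed: ?listed
  note shift = shifted_index(1)[OF _ _] shifted_index(3)[OF _ _ _]
  have latin: "P {(1, 1), (1, 2), (2, 1), (m, 1)}" "P {(2, 1), (2, 2), (1, 1), (m, 1)}"
    if "2 < m" "m \<le> s" for m
    using listed[THEN conjunct1, rule_format, OF shift(1)[OF that]]
    unfolding shifted_index(2)[OF that(1)] by blast+
  have pairs: "P {(1, 1), (1, 2), (i, 1), (j, 1)}" "P {(2, 1), (2, 2), (i, 1), (j, 1)}"
    "P {(1, 1), (2, 1), (i, 1), (j, 1)}" "P {(j, 1), (j, 2), (1, 1), (i, 1)}"
    "P {(j, 1), (j, 2), (2, 1), (i, 1)}"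
    if "2 < i" "i \<le> s" "2 < j" "j \<le> s" "i \<noteq> j" for i j
    using listed[THEN conjunct2, THEN conjunct1, rule_format,
        OF shift(1)[OF that(1,2)] shift(1)[OF that(3,4)] shift(2)[OF that(1,3,5)]]
    unfolding shifted_index(2)[OF that(1)] shifted_index(2)[OF that(3)] by blast+
  have triples: "P {(1, 1), (i, 1), (j, 1), (k, 1)}" "P {(2, 1), (i, 1), (j, 1), (k, 1)}"
    "P {(k, 1), (k, 2), (i, 1), (j, 1)}"
    if "2 < i" "i \<le> s" "2 < j" "j \<le> s" "2 < k" "k \<le> s" "i \<noteq> j" "i \<noteq> k" "j \<noteq> k" for i j k
    using listed[THEN conjunct2, THEN conjunct2, THEN conjunct1, rule_format,
        OF shift(1)[OF that(1,2)] shift(1)[OF that(3,4)] shift(1)[OF that(5,6)]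
          conjI[OF shift(2)[OF that(1,3,7)] conjI[OF shift(2)[OF that(1,5,8)] shift(2)[OF that(3,5,9)]]]]
    unfolding shifted_index(2)[OF that(1)] shifted_index(2)[OF that(3)] shifted_index(2)[OF that(5)]
    by blast+
  have quadruples: "P {(i, 1), (j, 1), (k, 1), (l, 1)}"
    if "2 < i" "i \<le> s" "2 < j" "j \<le> s" "2 < k" "k \<le> s" "2 < l" "l \<le> s" "distinct [i, j, k, l]"
    for i j k l
  proof -
    have "distinct [i - 2, j - 2, k - 2, l - 2]" using that by auto
    then show ?thesis
      using listed[THEN conjunct2, THEN conjunct2, THEN conjunct2, rule_format,
          OF shift(1)[OF that(1,2)] shift(1)[OF that(3,4)] shift(1)[OF that(5,6)] shift(1)[OF that(7,8)]]
      unfolding shifted_index(2)[OF that(1)] shifted_index(2)[OF that(3)] shifted_index(2)[OF that(5)]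
        shifted_index(2)[OF that(7)]
      by blast
  qed
  have symbol': "P {(1, 1), (1, 2), (m, 1), (m, 2)}" "P {(2, 1), (2, 2), (m, 1), (m, 2)}"
    "P {(m, 1), (m, 2), (1, 1), (2, 1)}" if "2 < m" "m \<le> s" for m
    using symbol[OF shift(1)[OF that]] unfolding shifted_index(2)[OF that(1)] by blast+
  have symbols': "P {(i, 1), (i, 2), (j, 1), (j, 2)}" if "2 < i" "i \<le> s" "2 < j" "j \<le> s" "i \<noteq> j" for i j
    using symbols[OF shift(1)[OF that(1,2)] shift(1)[OF that(3,4)] shift(2)[OF that(1,3,5)]]
    unfolding shifted_index(2)[OF that(1)] shifted_index(2)[OF that(3)] .
  show "\<forall>T. top_justified4 s T \<longrightarrow> P T"
    using top_justified4_families[of P s, OF coordinates symbol' symbols' latin pairs triples quadruples]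
    by blast
qed

theorem proposition3p2:
  fixes n s :: nat and M :: "nat \<Rightarrow> nat \<Rightarrow> nat \<Rightarrow> nat"
  assumes "s \<ge> 3" and "n \<ge> 1"
    and sud: "\<forall>i \<in> {1..s-2}. sudoku n (M i)"
    and mols: "\<forall>i \<in> {1..s-2}. \<forall>j \<in> {1..s-2}. i \<noteq> j \<longrightarrow>
                 orth_on (grid n) {0..<n^2} {0..<n^2} (case_prod (M i)) (case_prod (M j))"
  shows "strongly_orthogonal n s M \<longleftrightarrow>
    (\<forall>i \<in> {1..s-2}. subsquares_latin n (radix n (M i))) \<and>
    (\<forall>i \<in> {1..s-2}. \<forall>j \<in> {1..s-2}. i \<noteq> j \<longrightarrow>
        sudoku n (composite n (M i) (M j)) \<and>
        (\<forall>a<n. orth_on (large_row n a) {0..<n} {0..<n^2}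
                  (case_prod (radix n (M i))) (case_prod (M j))) \<and>
        (\<forall>b<n. orth_on (large_col n b) {0..<n} {0..<n^2}
                  (case_prod (radix n (M i))) (case_prod (M j)))) \<and>
    (\<forall>i \<in> {1..s-2}. \<forall>j \<in> {1..s-2}. \<forall>k \<in> {1..s-2}. i \<noteq> j \<and> i \<noteq> k \<and> j \<noteq> k \<longrightarrow>
        (\<forall>a<n. orth_on (large_row n a) {0..<n^2} {0..<n}
                  (case_prod (composite n (M i) (M j))) (case_prod (radix n (M k)))) \<and>
        (\<forall>b<n. orth_on (large_col n b) {0..<n^2} {0..<n}
                  (case_prod (composite n (M i) (M j))) (case_prod (radix n (M k)))) \<and>
        orth_on (grid n) {0..<n^2} {0..<n^2}
                  (case_prod (composite n (M i) (M j))) (case_prod (M k))) \<and>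
    (\<forall>i \<in> {1..s-2}. \<forall>j \<in> {1..s-2}. \<forall>k \<in> {1..s-2}. \<forall>l \<in> {1..s-2}.
        distinct [i, j, k, l] \<longrightarrow>
        orth_on (grid n) {0..<n^2} {0..<n^2}
                  (case_prod (composite n (M i) (M j))) (case_prod (composite n (M k) (M l))))"
  (is "_ \<longleftrightarrow> ?rhs")
proof -
  have sudoku_M: "sudoku n (M i)" and positive: "0 < i" if "i \<in> {1..s-2}" for i
    using sud that by auto
  have symbol: "rows_separate n M {(1, 1), (1, 2), (i + 2, 1), (i + 2, 2)} \<and>
      rows_separate n M {(2, 1), (2, 2), (i + 2, 1), (i + 2, 2)} \<and>
      rows_separate n M {(i + 2, 1), (i + 2, 2), (1, 1), (2, 1)}" if "i \<in> {1..s-2}" for i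
    using sudoku_rows_separate[of n M i, OF sudoku_M[OF that] positive[OF that]] by blast
  have symbols: "rows_separate n M {(i + 2, 1), (i + 2, 2), (j + 2, 1), (j + 2, 2)}"
    if "i \<in> {1..s-2}" "j \<in> {1..s-2}" "i \<noteq> j" for i j
    using that mols by (intro orth_rows_separate sudoku_M positive) auto
  have "strongly_orthogonal n s M \<longleftrightarrow> (\<forall>T. top_justified4 s T \<longrightarrow> rows_separate n M T)"
    by (rule strongly_orthogonal_iff_rows_separate[OF sud])
  also have "\<dots> \<longleftrightarrow> ?rhs"
  proof (rule all_top_justified4_iff[THEN trans], rule coordinate_rows_separate, erule symbol,
      erule (2) symbols)
  qed (intro conj_cong ball_cong refl imp_cong subsquares_latin_radix_iff[symmetric]
      sudoku_composite_iff[symmetric] large_rows_orth_radix_iff[symmetric]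
      large_cols_orth_radix_iff[symmetric] large_rows_orth_composite_iff[symmetric]
      large_cols_orth_composite_iff[symmetric] orth_composite_sudoku_iff[symmetric]
      orth_composites_iff[symmetric], simp_all add: sudoku_M positive)
  finally show ?thesis .
qed

end
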